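(* Let $F\colon\mathbb{A}\to\mathbb{B}$ be a double functor between double categories. Then $F$ is a double biequivalence if and only if both 2-functors $\mathbf{H}F\colon\mathbf{H}\mathbb{A}\to\mathbf{H}\mathbb{B}$ and $\mathcal{V}F\colon\mathcal{V}\mathbb{A}\to\mathcal{V}\mathbb{B}$ are biequivalences of 2-categories.
   Context: A double category has objects, horizontal morphisms, vertical morphisms and squares; a square $\alpha\colon(u\,{}^{a}_{b}\,v)$ has top horizontal boundary $a\colon A\to B$, bottom horizontal boundary $b\colon A'\to B'$, left vertical boundary $u\colon A\to A'$ and right vertical boundary $v\colon B\to B'$; compositions are strictly associative and unital and satisfy interchange; $e_A$ is the vertical identity on $A$; a square is vertically invertible if it is invertible for vertical composition. $\mathbf{H}\mathbb{A}$ is the underlying horizontal 2-category of $\mathbb{A}$: objects and horizontal morphisms of $\mathbb{A}$, and as 2-cells $a\Rightarrow b$ the squares $(e_A\,{}^{a}_{b}\,e_B)$. $\mathcal{V}\mathbb{A}$ is the 2-category whose objects are vertical morphisms $u\colon A\to A'$ of $\mathbb{A}$, whose morphisms $u\to v$ are squares with left boundary $u$ and right boundary $v$ (composed horizontally), and whose 2-cells from $\alpha\colon(u\,{}^{a}_{b}\,v)$ to $\beta\colon(u\,{}^{c}_{d}\,v)$ are pairs of squares $\sigma_0\colon(e_A\,{}^{a}_{c}\,e_B)$, $\sigma_1\colon(e_{A'}\,{}^{b}_{d}\,e_{B'})$ such that $\sigma_0$ vertically composed on top of $\beta$ equals $\alpha$ vertically composed on top of $\sigma_1$ (compositions of 2-cells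 componentwise). A horizontal morphism of $\mathbb{A}$ is a horizontal equivalence if it is an equivalence in $\mathbf{H}\mathbb{A}$; a square is weakly horizontally invertible if it is an equivalence in $\mathcal{V}\mathbb{A}$. A 2-functor $G\colon\mathcal{A}\to\mathcal{B}$ is a biequivalence if (b1) every object $B$ of $\mathcal{B}$ admits an object $A$ and an equivalence $B\to GA$; (b2) for every morphism $b\colon GA\to GC$ there is $a\colon A\to C$ and an invertible 2-cell $b\cong Ga$; (b3) for every 2-cell $\beta\colon Ga\Rightarrow Gc$ there is a unique 2-cell $\alpha\colon a\Rightarrow c$ with $G\alpha=\beta$. A double functor $F\colon\mathbb{A}\to\mathbb{B}$ is a double biequivalence if (db1) for every object $B\in\mathbb{B}$ there are an object $A\in\mathbb{A}$ and a horizontal equivalence $B\to FA$; (db2) for every horizontal morphism $b\colon FA\to FC$ in $\mathbb{B}$ there are a horizontal morphism $a\colon A\to C$ in $\mathbb{A}$ and a vertically invertible square $(e_{FA}\,{}^{b}_{Fa}\,e_{FC})$ in $\mathbb{B}$; (db3) for every vertical morphism $v\colon B\to B'$ in $\mathbb{B}$ there are a vertical morphism $u\colon A\to A'$ in $\mathbb{A}$ and a weakly horizontally invertible square in $\mathbb{B}$ with left boundary $v$, right boundary $Fu$ and horizontal boundaries horizontal equivalences $B\to FA$, $B'\to FA'$; (db4) for every square $\beta\colon(Fu\,{}^{Fa}_{Fc}\,Fu')$ in $\mathbb{B}$ there is a unique square $\alpha\colon(u\,{}^{a}_{c}\,u')$ in $\mathbb{A}$ with $F\alpha=\beta$. *)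

theory Defs
  imports Main
begin

text \<open>Composition of morphisms is written in applicative order:
  hcmp A g f is "f followed by g" (requires hcod f = hdom g); likewise vcmp.
  For squares, shcmp A beta alpha is alpha followed horizontally by beta
  (requires sright alpha = sleft beta) and svcmp A beta alpha is alpha placed
  on top of beta (requires sbot alpha = stop beta).
  shid A u is the horizontal identity square (u, id, id, u) on a vertical morphism u;
  svid A a is the vertical identity square (e_A, a, a, e_B) on a horizontal morphism a.\<close>

record ('o,'h,'v,'s) dbl =
  Ob :: "'o set"
  Hor :: "'h set"
  Ver :: "'v set"
  Sq :: "'s set"
  hdom :: "'h \<Rightarrow> 'o"
  hcod :: "'h \<Rightarrow> 'o"
  hcmp :: "'h \<Rightarrow> 'h \<Rightarrow> 'h"
  hid :: "'o \<Rightarrow> 'h"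
  vdom :: "'v \<Rightarrow> 'o"
  vcod :: "'v \<Rightarrow> 'o"
  vcmp :: "'v \<Rightarrow> 'v \<Rightarrow> 'v"
  vid :: "'o \<Rightarrow> 'v"
  stop :: "'s \<Rightarrow> 'h"
  sbot :: "'s \<Rightarrow> 'h"
  sleft :: "'s \<Rightarrow> 'v"
  sright :: "'s \<Rightarrow> 'v"
  shcmp :: "'s \<Rightarrow> 's \<Rightarrow> 's"
  svcmp :: "'s \<Rightarrow> 's \<Rightarrow> 's"
  shid :: "'v \<Rightarrow> 's"
  svid :: "'h \<Rightarrow> 's"

definition double_category :: "('o,'h,'v,'s,'z) dbl_scheme \<Rightarrow> bool" where
  "double_category A \<longleftrightarrow>
    \<comment> \<open>horizontal category\<close>
    (\<forall>f\<in>Hor A. hdom A f \<in> Ob A \<and> hcod A f \<in> Ob A) \<and>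
    (\<forall>x\<in>Ob A. hid A x \<in> Hor A \<and> hdom A (hid A x) = x \<and> hcod A (hid A x) = x) \<and>
    (\<forall>f\<in>Hor A. \<forall>g\<in>Hor A. hcod A f = hdom A g \<longrightarrow>
        hcmp A g f \<in> Hor A \<and> hdom A (hcmp A g f) = hdom A f \<and> hcod A (hcmp A g f) = hcod A g) \<and>
    (\<forall>f\<in>Hor A. \<forall>g\<in>Hor A. \<forall>h\<in>Hor A. hcod A f = hdom A g \<longrightarrow> hcod A g = hdom A h \<longrightarrow>
        hcmp A h (hcmp A g f) = hcmp A (hcmp A h g) f) \<and>
    (\<forall>f\<in>Hor A. hcmp A f (hid A (hdom A f)) = f \<and> hcmp A (hid A (hcod A f)) f = f) \<and>
    \<comment> \<open>vertical category\<close>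
    (\<forall>u\<in>Ver A. vdom A u \<in> Ob A \<and> vcod A u \<in> Ob A) \<and>
    (\<forall>x\<in>Ob A. vid A x \<in> Ver A \<and> vdom A (vid A x) = x \<and> vcod A (vid A x) = x) \<and>
    (\<forall>u\<in>Ver A. \<forall>v\<in>Ver A. vcod A u = vdom A v \<longrightarrow>
        vcmp A v u \<in> Ver A \<and> vdom A (vcmp A v u) = vdom A u \<and> vcod A (vcmp A v u) = vcod A v) \<and>
    (\<forall>u\<in>Ver A. \<forall>v\<in>Ver A. \<forall>w\<in>Ver A. vcod A u = vdom A v \<longrightarrow> vcod A v = vdom A w \<longrightarrow>
        vcmp A w (vcmp A v u) = vcmp A (vcmp A w v) u) \<and>
    (\<forall>u\<in>Ver A. vcmp A u (vid A (vdom A u)) = u \<and> vcmp A (vid A (vcod A u)) u = u) \<and>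
    \<comment> \<open>boundaries of squares\<close>
    (\<forall>\<alpha>\<in>Sq A. stop A \<alpha> \<in> Hor A \<and> sbot A \<alpha> \<in> Hor A \<and> sleft A \<alpha> \<in> Ver A \<and> sright A \<alpha> \<in> Ver A \<and>
        hdom A (stop A \<alpha>) = vdom A (sleft A \<alpha>) \<and> hcod A (stop A \<alpha>) = vdom A (sright A \<alpha>) \<and>
        hdom A (sbot A \<alpha>) = vcod A (sleft A \<alpha>) \<and> hcod A (sbot A \<alpha>) = vcod A (sright A \<alpha>)) \<and>
    \<comment> \<open>horizontal composition of squares\<close>
    (\<forall>\<alpha>\<in>Sq A. \<forall>\<beta>\<in>Sq A. sright A \<alpha> = sleft A \<beta> \<longrightarrow>
        shcmp A \<beta> \<alpha> \<in> Sq A \<and> sleft A (shcmp A \<beta> \<alpha>) = sleft A \<alpha> \<and> sright A (shcmp A \<beta> \<alpha>) = sright A \<beta> \<and>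
        stop A (shcmp A \<beta> \<alpha>) = hcmp A (stop A \<beta>) (stop A \<alpha>) \<and>
        sbot A (shcmp A \<beta> \<alpha>) = hcmp A (sbot A \<beta>) (sbot A \<alpha>)) \<and>
    (\<forall>\<alpha>\<in>Sq A. \<forall>\<beta>\<in>Sq A. \<forall>\<gamma>\<in>Sq A. sright A \<alpha> = sleft A \<beta> \<longrightarrow> sright A \<beta> = sleft A \<gamma> \<longrightarrow>
        shcmp A \<gamma> (shcmp A \<beta> \<alpha>) = shcmp A (shcmp A \<gamma> \<beta>) \<alpha>) \<and>
    (\<forall>u\<in>Ver A. shid A u \<in> Sq A \<and> sleft A (shid A u) = u \<and> sright A (shid A u) = u \<and>
        stop A (shid A u) = hid A (vdom A u) \<and> sbot A (shid A u) = hid A (vcod A u)) \<and>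
    (\<forall>\<alpha>\<in>Sq A. shcmp A \<alpha> (shid A (sleft A \<alpha>)) = \<alpha> \<and> shcmp A (shid A (sright A \<alpha>)) \<alpha> = \<alpha>) \<and>
    \<comment> \<open>vertical composition of squares\<close>
    (\<forall>\<alpha>\<in>Sq A. \<forall>\<beta>\<in>Sq A. sbot A \<alpha> = stop A \<beta> \<longrightarrow>
        svcmp A \<beta> \<alpha> \<in> Sq A \<and> stop A (svcmp A \<beta> \<alpha>) = stop A \<alpha> \<and> sbot A (svcmp A \<beta> \<alpha>) = sbot A \<beta> \<and>
        sleft A (svcmp A \<beta> \<alpha>) = vcmp A (sleft A \<beta>) (sleft A \<alpha>) \<and>
        sright A (svcmp A \<beta> \<alpha>) = vcmp A (sright A \<beta>) (sright A \<alpha>)) \<and>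
    (\<forall>\<alpha>\<in>Sq A. \<forall>\<beta>\<in>Sq A. \<forall>\<gamma>\<in>Sq A. sbot A \<alpha> = stop A \<beta> \<longrightarrow> sbot A \<beta> = stop A \<gamma> \<longrightarrow>
        svcmp A \<gamma> (svcmp A \<beta> \<alpha>) = svcmp A (svcmp A \<gamma> \<beta>) \<alpha>) \<and>
    (\<forall>a\<in>Hor A. svid A a \<in> Sq A \<and> stop A (svid A a) = a \<and> sbot A (svid A a) = a \<and>
        sleft A (svid A a) = vid A (hdom A a) \<and> sright A (svid A a) = vid A (hcod A a)) \<and>
    (\<forall>\<alpha>\<in>Sq A. svcmp A \<alpha> (svid A (stop A \<alpha>)) = \<alpha> \<and> svcmp A (svid A (sbot A \<alpha>)) \<alpha> = \<alpha>) \<and>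
    \<comment> \<open>interchange and compatibility of identities\<close>
    (\<forall>\<alpha>\<in>Sq A. \<forall>\<beta>\<in>Sq A. \<forall>\<gamma>\<in>Sq A. \<forall>\<delta>\<in>Sq A.
        sright A \<alpha> = sleft A \<beta> \<longrightarrow> sright A \<gamma> = sleft A \<delta> \<longrightarrow>
        sbot A \<alpha> = stop A \<gamma> \<longrightarrow> sbot A \<beta> = stop A \<delta> \<longrightarrow>
        svcmp A (shcmp A \<delta> \<gamma>) (shcmp A \<beta> \<alpha>) = shcmp A (svcmp A \<delta> \<beta>) (svcmp A \<gamma> \<alpha>)) \<and>
    (\<forall>a\<in>Hor A. \<forall>b\<in>Hor A. hcod A a = hdom A b \<longrightarrow>
        svid A (hcmp A b a) = shcmp A (svid A b) (svid A a)) \<and>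
    (\<forall>u\<in>Ver A. \<forall>v\<in>Ver A. vcod A u = vdom A v \<longrightarrow>
        shid A (vcmp A v u) = svcmp A (shid A v) (shid A u)) \<and>
    (\<forall>x\<in>Ob A. svid A (hid A x) = shid A (vid A x))"

record ('o,'h,'v,'s,'o2,'h2,'v2,'s2) dfun =
  FO :: "'o \<Rightarrow> 'o2"
  FH :: "'h \<Rightarrow> 'h2"
  FV :: "'v \<Rightarrow> 'v2"
  FS :: "'s \<Rightarrow> 's2"

definition double_functor ::
  "('o,'h,'v,'s,'z) dbl_scheme \<Rightarrow> ('o2,'h2,'v2,'s2,'z2) dbl_scheme \<Rightarrow>
   ('o,'h,'v,'s,'o2,'h2,'v2,'s2) dfun \<Rightarrow> bool" where
  "double_functor A B F \<longleftrightarrow>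
    (\<forall>x\<in>Ob A. FO F x \<in> Ob B) \<and>
    (\<forall>f\<in>Hor A. FH F f \<in> Hor B \<and> hdom B (FH F f) = FO F (hdom A f) \<and> hcod B (FH F f) = FO F (hcod A f)) \<and>
    (\<forall>u\<in>Ver A. FV F u \<in> Ver B \<and> vdom B (FV F u) = FO F (vdom A u) \<and> vcod B (FV F u) = FO F (vcod A u)) \<and>
    (\<forall>\<alpha>\<in>Sq A. FS F \<alpha> \<in> Sq B \<and> stop B (FS F \<alpha>) = FH F (stop A \<alpha>) \<and> sbot B (FS F \<alpha>) = FH F (sbot A \<alpha>) \<and>
        sleft B (FS F \<alpha>) = FV F (sleft A \<alpha>) \<and> sright B (FS F \<alpha>) = FV F (sright A \<alpha>)) \<and>
    (\<forall>x\<in>Ob A. FH F (hid A x) = hid B (FO F x) \<and> FV F (vid A x) = vid B (FO F x)) \<and>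
    (\<forall>f\<in>Hor A. \<forall>g\<in>Hor A. hcod A f = hdom A g \<longrightarrow> FH F (hcmp A g f) = hcmp B (FH F g) (FH F f)) \<and>
    (\<forall>u\<in>Ver A. \<forall>v\<in>Ver A. vcod A u = vdom A v \<longrightarrow> FV F (vcmp A v u) = vcmp B (FV F v) (FV F u)) \<and>
    (\<forall>u\<in>Ver A. FS F (shid A u) = shid B (FV F u)) \<and>
    (\<forall>a\<in>Hor A. FS F (svid A a) = svid B (FH F a)) \<and>
    (\<forall>\<alpha>\<in>Sq A. \<forall>\<beta>\<in>Sq A. sright A \<alpha> = sleft A \<beta> \<longrightarrow> FS F (shcmp A \<beta> \<alpha>) = shcmp B (FS F \<beta>) (FS F \<alpha>)) \<and>
    (\<forall>\<alpha>\<in>Sq A. \<forall>\<beta>\<in>Sq A. sbot A \<alpha> = stop A \<beta> \<longrightarrow> FS F (svcmp A \<beta> \<alpha>) = svcmp B (FS F \<beta>) (FS F \<alpha>))"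

text \<open>vcomp2 C tau sigma is sigma followed by tau (requires tgt2 sigma = src2 tau);
  comp1 C g f is f followed by g.\<close>

record ('o,'m,'c) tcat =
  Obj :: "'o set"
  Mor :: "'m set"
  dom1 :: "'m \<Rightarrow> 'o"
  cod1 :: "'m \<Rightarrow> 'o"
  comp1 :: "'m \<Rightarrow> 'm \<Rightarrow> 'm"
  id1 :: "'o \<Rightarrow> 'm"
  Cell :: "'c set"
  src2 :: "'c \<Rightarrow> 'm"
  tgt2 :: "'c \<Rightarrow> 'm"
  vcomp2 :: "'c \<Rightarrow> 'c \<Rightarrow> 'c"
  hcomp2 :: "'c \<Rightarrow> 'c \<Rightarrow> 'c"
  id2 :: "'m \<Rightarrow> 'c"

definition invertible2 :: "('o,'m,'c,'z) tcat_scheme \<Rightarrow> 'c \<Rightarrow> bool" where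
  "invertible2 C \<theta> \<longleftrightarrow> \<theta> \<in> Cell C \<and>
     (\<exists>\<theta>'\<in>Cell C. src2 C \<theta>' = tgt2 C \<theta> \<and> tgt2 C \<theta>' = src2 C \<theta> \<and>
        vcomp2 C \<theta>' \<theta> = id2 C (src2 C \<theta>) \<and> vcomp2 C \<theta> \<theta>' = id2 C (tgt2 C \<theta>))"

definition equivalence1 :: "('o,'m,'c,'z) tcat_scheme \<Rightarrow> 'm \<Rightarrow> bool" where
  "equivalence1 C f \<longleftrightarrow> f \<in> Mor C \<and>
     (\<exists>g\<in>Mor C. dom1 C g = cod1 C f \<and> cod1 C g = dom1 C f \<and>
        (\<exists>\<theta>. invertible2 C \<theta> \<and> src2 C \<theta> = comp1 C g f \<and> tgt2 C \<theta> = id1 C (dom1 C f)) \<and>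
        (\<exists>\<theta>. invertible2 C \<theta> \<and> src2 C \<theta> = comp1 C f g \<and> tgt2 C \<theta> = id1 C (cod1 C f)))"

record ('o,'m,'c,'o2,'m2,'c2) tfun =
  G0 :: "'o \<Rightarrow> 'o2"
  G1 :: "'m \<Rightarrow> 'm2"
  G2 :: "'c \<Rightarrow> 'c2"

definition biequivalence ::
  "('o,'m,'c,'z) tcat_scheme \<Rightarrow> ('o2,'m2,'c2,'z2) tcat_scheme \<Rightarrow>
   ('o,'m,'c,'o2,'m2,'c2) tfun \<Rightarrow> bool" where
  "biequivalence C D G \<longleftrightarrow>
    (\<forall>Y\<in>Obj D. \<exists>X\<in>Obj C. \<exists>e. equivalence1 D e \<and> dom1 D e = Y \<and> cod1 D e = G0 G X) \<and>
    (\<forall>X\<in>Obj C. \<forall>Z\<in>Obj C. \<forall>b\<in>Mor D. dom1 D b = G0 G X \<and> cod1 D b = G0 G Z \<longrightarrow>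
       (\<exists>a\<in>Mor C. dom1 C a = X \<and> cod1 C a = Z \<and>
          (\<exists>\<theta>. invertible2 D \<theta> \<and> src2 D \<theta> = b \<and> tgt2 D \<theta> = G1 G a))) \<and>
    (\<forall>a\<in>Mor C. \<forall>c\<in>Mor C. dom1 C a = dom1 C c \<and> cod1 C a = cod1 C c \<longrightarrow>
       (\<forall>\<beta>\<in>Cell D. src2 D \<beta> = G1 G a \<and> tgt2 D \<beta> = G1 G c \<longrightarrow>
          (\<exists>!\<alpha>. \<alpha> \<in> Cell C \<and> src2 C \<alpha> = a \<and> tgt2 C \<alpha> = c \<and> G2 G \<alpha> = \<beta>)))"

definition HH :: "('o,'h,'v,'s,'z) dbl_scheme \<Rightarrow> ('o,'h,'s) tcat" where
  "HH A = \<lparr> Obj = Ob A, Mor = Hor A, dom1 = hdom A, cod1 = hcod A, comp1 = hcmp A, id1 = hid A,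
     Cell = {\<alpha>\<in>Sq A. sleft A \<alpha> = vid A (hdom A (stop A \<alpha>)) \<and> sright A \<alpha> = vid A (hcod A (stop A \<alpha>))},
     src2 = stop A, tgt2 = sbot A, vcomp2 = svcmp A, hcomp2 = shcmp A, id2 = svid A \<rparr>"

text \<open>A 2-cell of V A from alpha to beta is represented as the quadruple
  (alpha, sigma0, sigma1, beta).\<close>

definition VV :: "('o,'h,'v,'s,'z) dbl_scheme \<Rightarrow> ('v,'s,'s \<times> 's \<times> 's \<times> 's) tcat" where
  "VV A = \<lparr> Obj = Ver A, Mor = Sq A, dom1 = sleft A, cod1 = sright A, comp1 = shcmp A, id1 = shid A,
     Cell = {(\<alpha>, \<sigma>0, \<sigma>1, \<beta>). \<alpha> \<in> Sq A \<and> \<beta> \<in> Sq A \<and>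
               sleft A \<alpha> = sleft A \<beta> \<and> sright A \<alpha> = sright A \<beta> \<and>
               \<sigma>0 \<in> Cell (HH A) \<and> stop A \<sigma>0 = stop A \<alpha> \<and> sbot A \<sigma>0 = stop A \<beta> \<and>
               \<sigma>1 \<in> Cell (HH A) \<and> stop A \<sigma>1 = sbot A \<alpha> \<and> sbot A \<sigma>1 = sbot A \<beta> \<and>
               svcmp A \<beta> \<sigma>0 = svcmp A \<sigma>1 \<alpha>},
     src2 = (\<lambda>(\<alpha>, \<sigma>0, \<sigma>1, \<beta>). \<alpha>),
     tgt2 = (\<lambda>(\<alpha>, \<sigma>0, \<sigma>1, \<beta>). \<beta>),
     vcomp2 = (\<lambda>(\<beta>, \<tau>0, \<tau>1, \<gamma>) (\<alpha>, \<sigma>0, \<sigma>1, \<beta>'). (\<alpha>, svcmp A \<tau>0 \<sigma>0, svcmp A \<tau>1 \<sigma>1, \<gamma>)),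
     hcomp2 = (\<lambda>(\<alpha>', \<tau>0, \<tau>1, \<beta>') (\<alpha>, \<sigma>0, \<sigma>1, \<beta>).
                 (shcmp A \<alpha>' \<alpha>, shcmp A \<tau>0 \<sigma>0, shcmp A \<tau>1 \<sigma>1, shcmp A \<beta>' \<beta>)),
     id2 = (\<lambda>\<alpha>. (\<alpha>, svid A (stop A \<alpha>), svid A (sbot A \<alpha>), \<alpha>)) \<rparr>"

definition HF :: "('o,'h,'v,'s,'o2,'h2,'v2,'s2) dfun \<Rightarrow> ('o,'h,'s,'o2,'h2,'s2) tfun" where
  "HF F = \<lparr> G0 = FO F, G1 = FH F, G2 = FS F \<rparr>"

definition VF :: "('o,'h,'v,'s,'o2,'h2,'v2,'s2) dfun \<Rightarrow>
                  ('v,'s,'s \<times> 's \<times> 's \<times> 's,'v2,'s2,'s2 \<times> 's2 \<times> 's2 \<times> 's2) tfun" where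
  "VF F = \<lparr> G0 = FV F, G1 = FS F,
            G2 = (\<lambda>(\<alpha>, \<sigma>0, \<sigma>1, \<beta>). (FS F \<alpha>, FS F \<sigma>0, FS F \<sigma>1, FS F \<beta>)) \<rparr>"

definition horizontal_equivalence :: "('o,'h,'v,'s,'z) dbl_scheme \<Rightarrow> 'h \<Rightarrow> bool" where
  "horizontal_equivalence A f \<longleftrightarrow> equivalence1 (HH A) f"

definition weakly_horizontally_invertible :: "('o,'h,'v,'s,'z) dbl_scheme \<Rightarrow> 's \<Rightarrow> bool" where
  "weakly_horizontally_invertible A \<alpha> \<longleftrightarrow> equivalence1 (VV A) \<alpha>"

definition vertically_invertible :: "('o,'h,'v,'s,'z) dbl_scheme \<Rightarrow> 's \<Rightarrow> bool" where
  "vertically_invertible A \<theta> \<longleftrightarrow> \<theta> \<in> Sq A \<and>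
     (\<exists>\<theta>'\<in>Sq A. stop A \<theta>' = sbot A \<theta> \<and> sbot A \<theta>' = stop A \<theta> \<and>
        svcmp A \<theta>' \<theta> = svid A (stop A \<theta>) \<and> svcmp A \<theta> \<theta>' = svid A (sbot A \<theta>))"

definition double_biequivalence ::
  "('o,'h,'v,'s,'z) dbl_scheme \<Rightarrow> ('o2,'h2,'v2,'s2,'z2) dbl_scheme \<Rightarrow>
   ('o,'h,'v,'s,'o2,'h2,'v2,'s2) dfun \<Rightarrow> bool" where
  "double_biequivalence A B F \<longleftrightarrow>
    \<comment> \<open>(db1)\<close>
    (\<forall>Y\<in>Ob B. \<exists>X\<in>Ob A. \<exists>h. horizontal_equivalence B h \<and> hdom B h = Y \<and> hcod B h = FO F X) \<and>
    \<comment> \<open>(db2)\<close>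
    (\<forall>X\<in>Ob A. \<forall>Z\<in>Ob A. \<forall>b\<in>Hor B. hdom B b = FO F X \<and> hcod B b = FO F Z \<longrightarrow>
       (\<exists>a\<in>Hor A. hdom A a = X \<and> hcod A a = Z \<and>
          (\<exists>\<theta>. vertically_invertible B \<theta> \<and> sleft B \<theta> = vid B (FO F X) \<and> sright B \<theta> = vid B (FO F Z) \<and>
               stop B \<theta> = b \<and> sbot B \<theta> = FH F a))) \<and>
    \<comment> \<open>(db3)\<close>
    (\<forall>v\<in>Ver B. \<exists>u\<in>Ver A. \<exists>\<alpha>. \<alpha> \<in> Sq B \<and> weakly_horizontally_invertible B \<alpha> \<and>
        sleft B \<alpha> = v \<and> sright B \<alpha> = FV F u \<and>
        horizontal_equivalence B (stop B \<alpha>) \<and> horizontal_equivalence B (sbot B \<alpha>)) \<and>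
    \<comment> \<open>(db4)\<close>
    (\<forall>u\<in>Ver A. \<forall>u'\<in>Ver A. \<forall>a\<in>Hor A. \<forall>c\<in>Hor A.
       hdom A a = vdom A u \<and> hcod A a = vdom A u' \<and> hdom A c = vcod A u \<and> hcod A c = vcod A u' \<longrightarrow>
       (\<forall>\<beta>\<in>Sq B. sleft B \<beta> = FV F u \<and> sright B \<beta> = FV F u' \<and> stop B \<beta> = FH F a \<and> sbot B \<beta> = FH F c \<longrightarrow>
          (\<exists>!\<alpha>. \<alpha> \<in> Sq A \<and> sleft A \<alpha> = u \<and> sright A \<alpha> = u' \<and> stop A \<alpha> = a \<and> sbot A \<alpha> = c \<and>
                 FS F \<alpha> = \<beta>)))"

end

(*
  The horizontal 2-category H A sees the globular squares, the 2-category V A sees all squares,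
  and the 2-cells of V A are pairs of globular squares. Conditions (db1) and (db2) are (b1) and
  (b2) for H F, because a globular square is invertible in H B exactly when it is vertically
  invertible; (db3) is (b1) for V F, because the top and bottom of a weakly horizontally invertible
  square are horizontal equivalences. Everything else rests on the fact that a 2-cell
  (sigma0, sigma1) of V B is invertible iff sigma0 and sigma1 are. Hence a square of B can be
  conjugated by invertible globular squares into one with boundaries in the image of F, which
  (db4) lifts; conversely, (b2) for V F gives an invertible 2-cell from a square to some F alpha0,
  and correcting alpha0 by lifts of the components produces a preimage with the prescribed
  boundaries. Uniqueness of lifts of squares and (b3) for V F are interderived through the unique
  lifts of globular squares given by (b3) for H F.
*)

theory Submission
  imports Defs
begin

lemma equivalence1I:
  assumes "f \<in> Mor C" "g \<in> Mor C" "dom1 C g = cod1 C f" "cod1 C g = dom1 C f"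
    and "invertible2 C \<theta>" "src2 C \<theta> = comp1 C g f" "tgt2 C \<theta> = id1 C (dom1 C f)"
    and "invertible2 C \<psi>" "src2 C \<psi> = comp1 C f g" "tgt2 C \<psi> = id1 C (cod1 C f)"
  shows "equivalence1 C f"
  using assms unfolding equivalence1_def by blast

lemma ex1_unique: "\<exists>!x. P x \<Longrightarrow> P a \<Longrightarrow> P b \<Longrightarrow> a = b"
  by blast

lemma invertible2_in_Cell: "invertible2 C \<theta> \<Longrightarrow> \<theta> \<in> Cell C"
  unfolding invertible2_def by blast

lemma equivalence1_in_Mor: "equivalence1 C f \<Longrightarrow> f \<in> Mor C"
  unfolding equivalence1_def by blast

lemma Cell_HH_iff [simp]:
  "\<theta> \<in> Cell (HH A) \<longleftrightarrow>
     \<theta> \<in> Sq A \<and> sleft A \<theta> = vid A (hdom A (stop A \<theta>)) \<and> sright A \<theta> = vid A (hcod A (stop A \<theta>))"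
  by (simp add: HH_def)

lemma HH_simps [simp]:
  "Obj (HH A) = Ob A" "Mor (HH A) = Hor A" "dom1 (HH A) = hdom A" "cod1 (HH A) = hcod A"
  "comp1 (HH A) = hcmp A" "id1 (HH A) = hid A" "src2 (HH A) = stop A" "tgt2 (HH A) = sbot A"
  "vcomp2 (HH A) = svcmp A" "id2 (HH A) = svid A"
  by (simp_all add: HH_def)

lemma VV_simps [simp]:
  "Obj (VV A) = Ver A" "Mor (VV A) = Sq A" "dom1 (VV A) = sleft A" "cod1 (VV A) = sright A"
  "comp1 (VV A) = shcmp A" "id1 (VV A) = shid A"
  "src2 (VV A) (\<alpha>, \<sigma>0, \<sigma>1, \<beta>) = \<alpha>" "tgt2 (VV A) (\<alpha>, \<sigma>0, \<sigma>1, \<beta>) = \<beta>"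
  "vcomp2 (VV A) (\<beta>, \<tau>0, \<tau>1, \<gamma>) (\<alpha>, \<sigma>0, \<sigma>1, \<beta>') = (\<alpha>, svcmp A \<tau>0 \<sigma>0, svcmp A \<tau>1 \<sigma>1, \<gamma>)"
  "id2 (VV A) \<alpha> = (\<alpha>, svid A (stop A \<alpha>), svid A (sbot A \<alpha>), \<alpha>)"
  by (simp_all add: VV_def)

lemma Cell_VV_iff [simp]:
  "(\<alpha>, \<sigma>0, \<sigma>1, \<beta>) \<in> Cell (VV A) \<longleftrightarrow>
     \<alpha> \<in> Sq A \<and> \<beta> \<in> Sq A \<and> sleft A \<alpha> = sleft A \<beta> \<and> sright A \<alpha> = sright A \<beta> \<and>
     \<sigma>0 \<in> Cell (HH A) \<and> stop A \<sigma>0 = stop A \<alpha> \<and> sbot A \<sigma>0 = stop A \<beta> \<and>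
     \<sigma>1 \<in> Cell (HH A) \<and> stop A \<sigma>1 = sbot A \<alpha> \<and> sbot A \<sigma>1 = sbot A \<beta> \<and>
     svcmp A \<beta> \<sigma>0 = svcmp A \<sigma>1 \<alpha>"
  by (simp add: VV_def)

lemma HF_simps [simp]: "G0 (HF F) = FO F" "G1 (HF F) = FH F" "G2 (HF F) = FS F"
  by (simp_all add: HF_def)

lemma VF_simps [simp]: "G0 (VF F) = FV F" "G1 (VF F) = FS F"
  "G2 (VF F) (\<alpha>, \<sigma>0, \<sigma>1, \<beta>) = (FS F \<alpha>, FS F \<sigma>0, FS F \<sigma>1, FS F \<beta>)"
  by (simp_all add: VF_def)

locale double_cat =
  fixes A :: "('o,'h,'v,'s,'z) dbl_scheme"
  assumes double_category: "double_category A"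
begin

lemma hdom_hcod_in_Ob [simp]: "f \<in> Hor A \<Longrightarrow> hdom A f \<in> Ob A" "f \<in> Hor A \<Longrightarrow> hcod A f \<in> Ob A"
  using double_category unfolding double_category_def by simp_all

lemma vdom_vcod_in_Ob [simp]: "u \<in> Ver A \<Longrightarrow> vdom A u \<in> Ob A" "u \<in> Ver A \<Longrightarrow> vcod A u \<in> Ob A"
  using double_category unfolding double_category_def by simp_all

lemma vid_ends [simp]:
  assumes "x \<in> Ob A" shows "vid A x \<in> Ver A" "vdom A (vid A x) = x" "vcod A (vid A x) = x"
  using assms double_category unfolding double_category_def by simp_all

lemma vcmp_vid [simp]:
  "u \<in> Ver A \<Longrightarrow> vdom A u = x \<Longrightarrow> vcmp A u (vid A x) = u"
  "u \<in> Ver A \<Longrightarrow> vcod A u = x \<Longrightarrow> vcmp A (vid A x) u = u"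
  using double_category unfolding double_category_def by auto

text \<open>The boundary equations point towards the horizontal morphisms; oriented the other way they
  would loop against the globularity conditions of \<open>Cell_HH_iff\<close>.\<close>

lemma Sq_boundary [simp]:
  assumes "\<alpha> \<in> Sq A"
  shows "stop A \<alpha> \<in> Hor A" "sbot A \<alpha> \<in> Hor A" "sleft A \<alpha> \<in> Ver A" "sright A \<alpha> \<in> Ver A"
    "vdom A (sleft A \<alpha>) = hdom A (stop A \<alpha>)" "vdom A (sright A \<alpha>) = hcod A (stop A \<alpha>)"
    "vcod A (sleft A \<alpha>) = hdom A (sbot A \<alpha>)" "vcod A (sright A \<alpha>) = hcod A (sbot A \<alpha>)"
  using assms double_category unfolding double_category_def by simp_all

lemma shcmp_boundary [simp]:
  assumes "\<alpha> \<in> Sq A" "\<beta> \<in> Sq A" "sright A \<alpha> = sleft A \<beta>"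
  shows "shcmp A \<beta> \<alpha> \<in> Sq A" "sleft A (shcmp A \<beta> \<alpha>) = sleft A \<alpha>" "sright A (shcmp A \<beta> \<alpha>) = sright A \<beta>"
    "stop A (shcmp A \<beta> \<alpha>) = hcmp A (stop A \<beta>) (stop A \<alpha>)"
    "sbot A (shcmp A \<beta> \<alpha>) = hcmp A (sbot A \<beta>) (sbot A \<alpha>)"
  using assms double_category unfolding double_category_def by simp_all

lemma shid_boundary [simp]:
  assumes "u \<in> Ver A"
  shows "shid A u \<in> Sq A" "sleft A (shid A u) = u" "sright A (shid A u) = u"
    "stop A (shid A u) = hid A (vdom A u)" "sbot A (shid A u) = hid A (vcod A u)"
  using assms double_category unfolding double_category_def by simp_all

lemma svcmp_boundary [simp]:
  assumes "\<alpha> \<in> Sq A" "\<beta> \<in> Sq A" "sbot A \<alpha> = stop A \<beta>"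
  shows "svcmp A \<beta> \<alpha> \<in> Sq A" "stop A (svcmp A \<beta> \<alpha>) = stop A \<alpha>" "sbot A (svcmp A \<beta> \<alpha>) = sbot A \<beta>"
    "sleft A (svcmp A \<beta> \<alpha>) = vcmp A (sleft A \<beta>) (sleft A \<alpha>)"
    "sright A (svcmp A \<beta> \<alpha>) = vcmp A (sright A \<beta>) (sright A \<alpha>)"
  using assms double_category unfolding double_category_def by simp_all

lemma svcmp_assoc:
  assumes "\<alpha> \<in> Sq A" "\<beta> \<in> Sq A" "\<gamma> \<in> Sq A" "sbot A \<alpha> = stop A \<beta>" "sbot A \<beta> = stop A \<gamma>"
  shows "svcmp A \<gamma> (svcmp A \<beta> \<alpha>) = svcmp A (svcmp A \<gamma> \<beta>) \<alpha>"
  using assms double_category unfolding double_category_def by simp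

lemma svid_boundary [simp]:
  assumes "a \<in> Hor A"
  shows "svid A a \<in> Sq A" "stop A (svid A a) = a" "sbot A (svid A a) = a"
    "sleft A (svid A a) = vid A (hdom A a)" "sright A (svid A a) = vid A (hcod A a)"
  using assms double_category unfolding double_category_def by simp_all

lemma svcmp_svid [simp]:
  "\<alpha> \<in> Sq A \<Longrightarrow> stop A \<alpha> = a \<Longrightarrow> svcmp A \<alpha> (svid A a) = \<alpha>"
  "\<alpha> \<in> Sq A \<Longrightarrow> sbot A \<alpha> = a \<Longrightarrow> svcmp A (svid A a) \<alpha> = \<alpha>"
  using double_category unfolding double_category_def by auto

text \<open>Not a simp rule: its premise unfolds into conditions that it rewrites itself.\<close>

lemma Cell_HH_sbot_ends:
  assumes "\<theta> \<in> Cell (HH A)"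
  shows "hdom A (sbot A \<theta>) = hdom A (stop A \<theta>)" "hcod A (sbot A \<theta>) = hcod A (stop A \<theta>)"
  using assms by (metis Cell_HH_iff Sq_boundary(1,7,8) hdom_hcod_in_Ob vid_ends(3))+

end

section \<open>Invertible 2-cells of H A and V A\<close>

context double_cat
begin

lemma globular_if_svcmp_globular:
  assumes \<theta>: "\<theta> \<in> Cell (HH A)" and \<theta>': "\<theta>' \<in> Sq A" "stop A \<theta>' = sbot A \<theta>"
    and comp: "svcmp A \<theta>' \<theta> \<in> Cell (HH A)"
  shows "\<theta>' \<in> Cell (HH A)"
proof -
  note ends = Cell_HH_sbot_ends[OF \<theta>]
  have "sleft A \<theta>' = sleft A (svcmp A \<theta>' \<theta>)" "sright A \<theta>' = sright A (svcmp A \<theta>' \<theta>)"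
    using \<theta> \<theta>' ends by simp_all
  with comp \<theta> \<theta>' ends show ?thesis
    by simp
qed

lemma invertible2_HH_iff:
  "invertible2 (HH A) \<theta> \<longleftrightarrow> vertically_invertible A \<theta> \<and> \<theta> \<in> Cell (HH A)"
proof
  assume \<theta>: "vertically_invertible A \<theta> \<and> \<theta> \<in> Cell (HH A)"
  then obtain \<theta>' where \<theta>': "\<theta>' \<in> Sq A" "stop A \<theta>' = sbot A \<theta>" "sbot A \<theta>' = stop A \<theta>"
    "svcmp A \<theta>' \<theta> = svid A (stop A \<theta>)" "svcmp A \<theta> \<theta>' = svid A (sbot A \<theta>)"
    unfolding vertically_invertible_def by blast
  have "\<theta>' \<in> Cell (HH A)"
    using globular_if_svcmp_globular[of \<theta> \<theta>'] \<theta> \<theta>' by simp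
  with \<theta> \<theta>' show "invertible2 (HH A) \<theta>"
    unfolding invertible2_def by auto
qed (auto simp: invertible2_def vertically_invertible_def)

lemma ex_vertically_invertible_globular_iff:
  assumes "b \<in> Hor A" "hdom A b = x" "hcod A b = z"
  shows "(\<exists>\<theta>. vertically_invertible A \<theta> \<and> sleft A \<theta> = vid A x \<and> sright A \<theta> = vid A z \<and>
            stop A \<theta> = b \<and> sbot A \<theta> = c) \<longleftrightarrow>
         (\<exists>\<theta>. invertible2 (HH A) \<theta> \<and> stop A \<theta> = b \<and> sbot A \<theta> = c)"
  using assms by (auto simp: invertible2_HH_iff vertically_invertible_def)

lemma svcmp_left_inverse_Cell_VV:
  assumes cell: "(\<alpha>, \<sigma>0, \<sigma>1, \<beta>) \<in> Cell (VV A)"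
    and \<rho>: "\<rho> \<in> Sq A" "stop A \<rho> = sbot A \<sigma>1" "svcmp A \<rho> \<sigma>1 = svid A (stop A \<sigma>1)"
  shows "svcmp A \<rho> (svcmp A \<beta> \<sigma>0) = \<alpha>"
proof -
  have "svcmp A \<rho> (svcmp A \<beta> \<sigma>0) = svcmp A \<rho> (svcmp A \<sigma>1 \<alpha>)"
    using cell by simp
  also have "\<dots> = svcmp A (svcmp A \<rho> \<sigma>1) \<alpha>"
    by (rule svcmp_assoc) (use cell \<rho> in simp_all)
  finally show ?thesis
    using cell \<rho> by simp
qed

lemma invertible2_VV_iff:
  assumes cell: "(\<alpha>, \<sigma>0, \<sigma>1, \<beta>) \<in> Cell (VV A)"
  shows "invertible2 (VV A) (\<alpha>, \<sigma>0, \<sigma>1, \<beta>) \<longleftrightarrow> invertible2 (HH A) \<sigma>0 \<and> invertible2 (HH A) \<sigma>1"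
proof
  assume "invertible2 (VV A) (\<alpha>, \<sigma>0, \<sigma>1, \<beta>)"
  then obtain \<rho>0 \<rho>1 where "(\<beta>, \<rho>0, \<rho>1, \<alpha>) \<in> Cell (VV A)"
    "vcomp2 (VV A) (\<beta>, \<rho>0, \<rho>1, \<alpha>) (\<alpha>, \<sigma>0, \<sigma>1, \<beta>) = id2 (VV A) \<alpha>"
    "vcomp2 (VV A) (\<alpha>, \<sigma>0, \<sigma>1, \<beta>) (\<beta>, \<rho>0, \<rho>1, \<alpha>) = id2 (VV A) \<beta>"
    unfolding invertible2_def by (auto simp del: Cell_VV_iff)
  with cell show "invertible2 (HH A) \<sigma>0 \<and> invertible2 (HH A) \<sigma>1"
    unfolding invertible2_def by auto
next
  assume "invertible2 (HH A) \<sigma>0 \<and> invertible2 (HH A) \<sigma>1"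
  then obtain \<rho>0 \<rho>1 where \<rho>0: "\<rho>0 \<in> Cell (HH A)" "stop A \<rho>0 = sbot A \<sigma>0" "sbot A \<rho>0 = stop A \<sigma>0"
      "svcmp A \<rho>0 \<sigma>0 = svid A (stop A \<sigma>0)" "svcmp A \<sigma>0 \<rho>0 = svid A (sbot A \<sigma>0)"
    and \<rho>1: "\<rho>1 \<in> Cell (HH A)" "stop A \<rho>1 = sbot A \<sigma>1" "sbot A \<rho>1 = stop A \<sigma>1"
      "svcmp A \<rho>1 \<sigma>1 = svid A (stop A \<sigma>1)" "svcmp A \<sigma>1 \<rho>1 = svid A (sbot A \<sigma>1)"
    unfolding invertible2_def by auto
  have sq: "\<alpha> \<in> Sq A" "\<beta> \<in> Sq A" "\<sigma>0 \<in> Sq A" "\<sigma>1 \<in> Sq A" "\<rho>0 \<in> Sq A" "\<rho>1 \<in> Sq A"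
    using cell \<rho>0 \<rho>1 by simp_all
  have "svcmp A \<rho>1 \<beta> = svcmp A \<rho>1 (svcmp A \<beta> (svcmp A \<sigma>0 \<rho>0))"
    using cell sq \<rho>0 by simp
  also have "svcmp A \<beta> (svcmp A \<sigma>0 \<rho>0) = svcmp A (svcmp A \<beta> \<sigma>0) \<rho>0"
    by (rule svcmp_assoc) (use cell sq \<rho>0 in simp_all)
  also have "svcmp A \<rho>1 \<dots> = svcmp A (svcmp A \<rho>1 (svcmp A \<beta> \<sigma>0)) \<rho>0"
    by (rule svcmp_assoc) (use cell sq \<rho>0 \<rho>1 in simp_all)
  also have "svcmp A \<rho>1 (svcmp A \<beta> \<sigma>0) = \<alpha>"
    using svcmp_left_inverse_Cell_VV[OF cell] \<rho>1 by simp
  finally have inv: "(\<beta>, \<rho>0, \<rho>1, \<alpha>) \<in> Cell (VV A)"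
    using cell \<rho>0 \<rho>1 by simp
  show "invertible2 (VV A) (\<alpha>, \<sigma>0, \<sigma>1, \<beta>)"
    unfolding invertible2_def
    by (intro conjI bexI[of _ "(\<beta>, \<rho>0, \<rho>1, \<alpha>)"]) (use cell inv \<rho>0 \<rho>1 in simp_all)
qed

lemma weakly_horizontally_invertible_boundaries:
  assumes "weakly_horizontally_invertible A e"
  shows "horizontal_equivalence A (stop A e)" "horizontal_equivalence A (sbot A e)"
proof -
  obtain g \<theta> \<psi> where e: "e \<in> Sq A" and g: "g \<in> Sq A" "sleft A g = sright A e" "sright A g = sleft A e"
    and \<theta>: "invertible2 (VV A) \<theta>" "src2 (VV A) \<theta> = shcmp A g e" "tgt2 (VV A) \<theta> = shid A (sleft A e)"
    and \<psi>: "invertible2 (VV A) \<psi>" "src2 (VV A) \<psi> = shcmp A e g" "tgt2 (VV A) \<psi> = shid A (sright A e)"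
    using assms unfolding weakly_horizontally_invertible_def equivalence1_def by auto
  obtain \<theta>0 \<theta>1 \<psi>0 \<psi>1 where
    \<theta>_eq: "\<theta> = (shcmp A g e, \<theta>0, \<theta>1, shid A (sleft A e))" and
    \<psi>_eq: "\<psi> = (shcmp A e g, \<psi>0, \<psi>1, shid A (sright A e))"
    using \<theta>(2,3) \<psi>(2,3) by (cases \<theta>, cases \<psi>) auto
  have cells: "(shcmp A g e, \<theta>0, \<theta>1, shid A (sleft A e)) \<in> Cell (VV A)"
    "(shcmp A e g, \<psi>0, \<psi>1, shid A (sright A e)) \<in> Cell (VV A)"
    using \<theta>(1) \<psi>(1) unfolding \<theta>_eq \<psi>_eq invertible2_def by (simp_all only:)
  then have inv: "invertible2 (HH A) \<theta>0" "invertible2 (HH A) \<theta>1"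
    "invertible2 (HH A) \<psi>0" "invertible2 (HH A) \<psi>1"
    using \<theta>(1) \<psi>(1) invertible2_VV_iff unfolding \<theta>_eq \<psi>_eq by blast+
  have "hdom A (stop A g) = hcod A (stop A e)" "hcod A (stop A g) = hdom A (stop A e)"
    "hdom A (sbot A g) = hcod A (sbot A e)" "hcod A (sbot A g) = hdom A (sbot A e)"
    using Sq_boundary(5-8)[OF e] Sq_boundary(5-8)[OF g(1)] g(2,3) by metis+
  with cells inv e g show "horizontal_equivalence A (stop A e)" "horizontal_equivalence A (sbot A e)"
    unfolding horizontal_equivalence_def
    by (auto intro: equivalence1I[where g = "stop A g" and \<theta> = \<theta>0 and \<psi> = \<psi>0]
                    equivalence1I[where g = "sbot A g" and \<theta> = \<theta>1 and \<psi> = \<psi>1])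
qed

text \<open>The witness is \<open>\<theta>1 \<cdot> b \<cdot> \<theta>0\<inverse>\<close> in vertical composition.\<close>

lemma invertible2_VV_conjugate:
  assumes b: "b \<in> Sq A"
    and \<theta>0: "invertible2 (HH A) \<theta>0" "stop A \<theta>0 = stop A b"
    and \<theta>1: "invertible2 (HH A) \<theta>1" "stop A \<theta>1 = sbot A b"
  obtains \<beta> where "\<beta> \<in> Sq A" "sleft A \<beta> = sleft A b" "sright A \<beta> = sright A b"
    "stop A \<beta> = sbot A \<theta>0" "sbot A \<beta> = sbot A \<theta>1" "invertible2 (VV A) (b, \<theta>0, \<theta>1, \<beta>)"
proof -
  obtain \<rho>0 where \<rho>0: "\<rho>0 \<in> Cell (HH A)" "stop A \<rho>0 = sbot A \<theta>0" "sbot A \<rho>0 = stop A \<theta>0"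
    "svcmp A \<rho>0 \<theta>0 = svid A (stop A \<theta>0)"
    using \<theta>0(1) unfolding invertible2_def by auto
  have cells: "\<theta>0 \<in> Cell (HH A)" "\<theta>1 \<in> Cell (HH A)"
    using \<theta>0(1) \<theta>1(1) unfolding invertible2_def by simp_all
  note ends = Cell_HH_sbot_ends[OF cells(1)] Cell_HH_sbot_ends[OF cells(2)] Cell_HH_sbot_ends[OF \<rho>0(1)]
  define \<beta> where "\<beta> = svcmp A \<theta>1 (svcmp A b \<rho>0)"
  have \<beta>: "\<beta> \<in> Sq A" "sleft A \<beta> = sleft A b" "sright A \<beta> = sright A b"
    "stop A \<beta> = sbot A \<theta>0" "sbot A \<beta> = sbot A \<theta>1"
    using b \<theta>0 \<theta>1 \<rho>0 cells ends by (simp_all add: \<beta>_def)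
  have "svcmp A \<beta> \<theta>0 = svcmp A \<theta>1 (svcmp A (svcmp A b \<rho>0) \<theta>0)"
    unfolding \<beta>_def by (rule svcmp_assoc[symmetric]) (use b \<theta>0 \<theta>1 \<rho>0 cells in simp_all)
  also have "svcmp A (svcmp A b \<rho>0) \<theta>0 = svcmp A b (svcmp A \<rho>0 \<theta>0)"
    by (rule svcmp_assoc[symmetric]) (use b \<theta>0 \<rho>0 cells in simp_all)
  finally have "svcmp A \<beta> \<theta>0 = svcmp A \<theta>1 b"
    using b \<theta>0 \<rho>0 by simp
  then have "(b, \<theta>0, \<theta>1, \<beta>) \<in> Cell (VV A)"
    using b \<beta> \<theta>0 \<theta>1 cells by simp
  with \<beta> \<theta>0(1) \<theta>1(1) show thesis
    using that invertible2_VV_iff by blast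
qed

end

section \<open>Biequivalences clause by clause\<close>

text \<open>Conditions (b1), (b2) and (b3) of a biequivalence, and condition (db4) of a double biequivalence.\<close>

definition essentially_surjective_on_objects ::
  "('o,'m,'c,'z) tcat_scheme \<Rightarrow> ('o2,'m2,'c2,'z2) tcat_scheme \<Rightarrow> ('o,'m,'c,'o2,'m2,'c2) tfun \<Rightarrow> bool"
  where "essentially_surjective_on_objects C D G \<longleftrightarrow>
    (\<forall>Y\<in>Obj D. \<exists>X\<in>Obj C. \<exists>e. equivalence1 D e \<and> dom1 D e = Y \<and> cod1 D e = G0 G X)"

definition locally_essentially_surjective ::
  "('o,'m,'c,'z) tcat_scheme \<Rightarrow> ('o2,'m2,'c2,'z2) tcat_scheme \<Rightarrow> ('o,'m,'c,'o2,'m2,'c2) tfun \<Rightarrow> bool"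
  where "locally_essentially_surjective C D G \<longleftrightarrow>
    (\<forall>X\<in>Obj C. \<forall>Z\<in>Obj C. \<forall>b\<in>Mor D. dom1 D b = G0 G X \<and> cod1 D b = G0 G Z \<longrightarrow>
       (\<exists>a\<in>Mor C. dom1 C a = X \<and> cod1 C a = Z \<and>
          (\<exists>\<theta>. invertible2 D \<theta> \<and> src2 D \<theta> = b \<and> tgt2 D \<theta> = G1 G a)))"

definition locally_fully_faithful ::
  "('o,'m,'c,'z) tcat_scheme \<Rightarrow> ('o2,'m2,'c2,'z2) tcat_scheme \<Rightarrow> ('o,'m,'c,'o2,'m2,'c2) tfun \<Rightarrow> bool"
  where "locally_fully_faithful C D G \<longleftrightarrow>
    (\<forall>a\<in>Mor C. \<forall>c\<in>Mor C. dom1 C a = dom1 C c \<and> cod1 C a = cod1 C c \<longrightarrow>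
       (\<forall>\<beta>\<in>Cell D. src2 D \<beta> = G1 G a \<and> tgt2 D \<beta> = G1 G c \<longrightarrow>
          (\<exists>!\<alpha>. \<alpha> \<in> Cell C \<and> src2 C \<alpha> = a \<and> tgt2 C \<alpha> = c \<and> G2 G \<alpha> = \<beta>)))"

lemma biequivalence_iff:
  "biequivalence C D G \<longleftrightarrow> essentially_surjective_on_objects C D G \<and>
     locally_essentially_surjective C D G \<and> locally_fully_faithful C D G"
  unfolding biequivalence_def essentially_surjective_on_objects_def locally_essentially_surjective_def
    locally_fully_faithful_def by (rule refl)

lemma locally_essentially_surjectiveE:
  assumes "locally_essentially_surjective C D G" "X \<in> Obj C" "Z \<in> Obj C" "b \<in> Mor D"
    "dom1 D b = G0 G X" "cod1 D b = G0 G Z"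
  obtains a \<theta> where "a \<in> Mor C" "dom1 C a = X" "cod1 C a = Z"
    "invertible2 D \<theta>" "src2 D \<theta> = b" "tgt2 D \<theta> = G1 G a"
  using assms unfolding locally_essentially_surjective_def by blast

lemma locally_fully_faithfulD:
  assumes "locally_fully_faithful C D G" "a \<in> Mor C" "c \<in> Mor C"
    "dom1 C a = dom1 C c" "cod1 C a = cod1 C c"
    "\<beta> \<in> Cell D" "src2 D \<beta> = G1 G a" "tgt2 D \<beta> = G1 G c"
  shows "\<exists>!\<alpha>. \<alpha> \<in> Cell C \<and> src2 C \<alpha> = a \<and> tgt2 C \<alpha> = c \<and> G2 G \<alpha> = \<beta>"
  using assms unfolding locally_fully_faithful_def by blast

definition fully_faithful_on_squares ::
  "('o,'h,'v,'s,'z) dbl_scheme \<Rightarrow> ('o2,'h2,'v2,'s2,'z2) dbl_scheme \<Rightarrow>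
   ('o,'h,'v,'s,'o2,'h2,'v2,'s2) dfun \<Rightarrow> bool"
  where "fully_faithful_on_squares A B F \<longleftrightarrow>
    (\<forall>u\<in>Ver A. \<forall>u'\<in>Ver A. \<forall>a\<in>Hor A. \<forall>c\<in>Hor A.
       hdom A a = vdom A u \<and> hcod A a = vdom A u' \<and> hdom A c = vcod A u \<and> hcod A c = vcod A u' \<longrightarrow>
       (\<forall>\<beta>\<in>Sq B. sleft B \<beta> = FV F u \<and> sright B \<beta> = FV F u' \<and> stop B \<beta> = FH F a \<and> sbot B \<beta> = FH F c \<longrightarrow>
          (\<exists>!\<alpha>. \<alpha> \<in> Sq A \<and> sleft A \<alpha> = u \<and> sright A \<alpha> = u' \<and> stop A \<alpha> = a \<and> sbot A \<alpha> = c \<and>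
                 FS F \<alpha> = \<beta>)))"

lemma fully_faithful_on_squaresD:
  assumes "fully_faithful_on_squares A B F" "u \<in> Ver A" "u' \<in> Ver A" "a \<in> Hor A" "c \<in> Hor A"
    "hdom A a = vdom A u" "hcod A a = vdom A u'" "hdom A c = vcod A u" "hcod A c = vcod A u'"
    "\<beta> \<in> Sq B" "sleft B \<beta> = FV F u" "sright B \<beta> = FV F u'" "stop B \<beta> = FH F a" "sbot B \<beta> = FH F c"
  shows "\<exists>!\<alpha>. \<alpha> \<in> Sq A \<and> sleft A \<alpha> = u \<and> sright A \<alpha> = u' \<and> stop A \<alpha> = a \<and> sbot A \<alpha> = c \<and>
           FS F \<alpha> = \<beta>"
  using assms unfolding fully_faithful_on_squares_def by blast

locale double_functor_between = A: double_cat A + B: double_cat B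
  for A :: "('o,'h,'v,'s,'z) dbl_scheme" and B :: "('o2,'h2,'v2,'s2,'z2) dbl_scheme" +
  fixes F :: "('o,'h,'v,'s,'o2,'h2,'v2,'s2) dfun"
  assumes double_functor: "double_functor A B F"
begin

lemma FH_ends [simp]:
  assumes "f \<in> Hor A"
  shows "FH F f \<in> Hor B" "hdom B (FH F f) = FO F (hdom A f)" "hcod B (FH F f) = FO F (hcod A f)"
  using assms double_functor unfolding double_functor_def by simp_all

lemma FV_ends [simp]:
  assumes "u \<in> Ver A"
  shows "FV F u \<in> Ver B" "vdom B (FV F u) = FO F (vdom A u)" "vcod B (FV F u) = FO F (vcod A u)"
  using assms double_functor unfolding double_functor_def by simp_all

lemma FS_boundary [simp]:
  assumes "\<alpha> \<in> Sq A"
  shows "FS F \<alpha> \<in> Sq B" "stop B (FS F \<alpha>) = FH F (stop A \<alpha>)" "sbot B (FS F \<alpha>) = FH F (sbot A \<alpha>)"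
    "sleft B (FS F \<alpha>) = FV F (sleft A \<alpha>)" "sright B (FS F \<alpha>) = FV F (sright A \<alpha>)"
  using assms double_functor unfolding double_functor_def by simp_all

lemma FV_vid [simp]: "x \<in> Ob A \<Longrightarrow> FV F (vid A x) = vid B (FO F x)"
  using double_functor unfolding double_functor_def by simp

lemma FS_svid [simp]: "a \<in> Hor A \<Longrightarrow> FS F (svid A a) = svid B (FH F a)"
  using double_functor unfolding double_functor_def by simp

lemma FS_svcmp [simp]:
  "\<alpha> \<in> Sq A \<Longrightarrow> \<beta> \<in> Sq A \<Longrightarrow> sbot A \<alpha> = stop A \<beta> \<Longrightarrow> FS F (svcmp A \<beta> \<alpha>) = svcmp B (FS F \<beta>) (FS F \<alpha>)"
  using double_functor unfolding double_functor_def by simp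

lemma double_biequivalence_iff:
  "double_biequivalence A B F \<longleftrightarrow>
     essentially_surjective_on_objects (HH A) (HH B) (HF F) \<and>
     locally_essentially_surjective (HH A) (HH B) (HF F) \<and>
     essentially_surjective_on_objects (VV A) (VV B) (VF F) \<and>
     fully_faithful_on_squares A B F"
  unfolding double_biequivalence_def fully_faithful_on_squares_def essentially_surjective_on_objects_def
    locally_essentially_surjective_def horizontal_equivalence_def weakly_horizontally_invertible_def
    HH_simps VV_simps HF_simps VF_simps
  apply (intro conj_cong refl)
  subgoal by (simp add: B.ex_vertically_invertible_globular_iff)
  subgoal
    using B.weakly_horizontally_invertible_boundaries[unfolded weakly_horizontally_invertible_def
        horizontal_equivalence_def] equivalence1_in_Mor[of "VV B"]
    by (simp only: VV_simps) blast
  done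

lemma locally_fully_faithful_HH:
  assumes ff: "fully_faithful_on_squares A B F"
  shows "locally_fully_faithful (HH A) (HH B) (HF F)"
  unfolding locally_fully_faithful_def HH_simps HF_simps
proof (intro ballI impI)
  fix a c \<beta>
  assume a: "a \<in> Hor A" "c \<in> Hor A" "hdom A a = hdom A c \<and> hcod A a = hcod A c"
    and \<beta>: "\<beta> \<in> Cell (HH B)" "stop B \<beta> = FH F a \<and> sbot B \<beta> = FH F c"
  have "\<exists>!\<alpha>. \<alpha> \<in> Sq A \<and> sleft A \<alpha> = vid A (hdom A a) \<and> sright A \<alpha> = vid A (hcod A a) \<and>
          stop A \<alpha> = a \<and> sbot A \<alpha> = c \<and> FS F \<alpha> = \<beta>"
    by (rule fully_faithful_on_squaresD[OF ff]) (use a \<beta> in simp_all)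
  moreover have "\<alpha> \<in> Cell (HH A) \<and> stop A \<alpha> = a \<and> sbot A \<alpha> = c \<and> FS F \<alpha> = \<beta> \<longleftrightarrow>
      \<alpha> \<in> Sq A \<and> sleft A \<alpha> = vid A (hdom A a) \<and> sright A \<alpha> = vid A (hcod A a) \<and>
      stop A \<alpha> = a \<and> sbot A \<alpha> = c \<and> FS F \<alpha> = \<beta>" for \<alpha>
    by auto
  ultimately show "\<exists>!\<alpha>. \<alpha> \<in> Cell (HH A) \<and> stop A \<alpha> = a \<and> sbot A \<alpha> = c \<and> FS F \<alpha> = \<beta>"
    by simp
qed

lemma fully_faithful_on_squares_injective:
  assumes ff: "fully_faithful_on_squares A B F" and sq: "\<alpha>1 \<in> Sq A" "\<alpha>2 \<in> Sq A"
    and same: "sleft A \<alpha>1 = sleft A \<alpha>2" "sright A \<alpha>1 = sright A \<alpha>2"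
      "stop A \<alpha>1 = stop A \<alpha>2" "sbot A \<alpha>1 = sbot A \<alpha>2"
    and eq: "FS F \<alpha>1 = FS F \<alpha>2"
  shows "\<alpha>1 = \<alpha>2"
proof -
  have "\<exists>!\<alpha>. \<alpha> \<in> Sq A \<and> sleft A \<alpha> = sleft A \<alpha>1 \<and> sright A \<alpha> = sright A \<alpha>1 \<and>
          stop A \<alpha> = stop A \<alpha>1 \<and> sbot A \<alpha> = sbot A \<alpha>1 \<and> FS F \<alpha> = FS F \<alpha>1"
    by (rule fully_faithful_on_squaresD[OF ff]) (use sq in simp_all)
  then show ?thesis
    by (rule ex1_unique) (use sq same eq in simp_all)
qed

lemma locally_essentially_surjective_VV:
  assumes les: "locally_essentially_surjective (HH A) (HH B) (HF F)"
    and ff: "fully_faithful_on_squares A B F"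
  shows "locally_essentially_surjective (VV A) (VV B) (VF F)"
  unfolding locally_essentially_surjective_def VV_simps VF_simps
proof (intro ballI impI)
  fix u u' b
  assume u: "u \<in> Ver A" "u' \<in> Ver A" and b: "b \<in> Sq B" "sleft B b = FV F u \<and> sright B b = FV F u'"
  have ends: "hdom B (stop B b) = FO F (vdom A u)" "hcod B (stop B b) = FO F (vdom A u')"
    "hdom B (sbot B b) = FO F (vcod A u)" "hcod B (sbot B b) = FO F (vcod A u')"
    using B.Sq_boundary(5-8)[OF b(1)] b(2) u by simp_all
  obtain a0 \<theta>0 where a0: "a0 \<in> Hor A" "hdom A a0 = vdom A u" "hcod A a0 = vdom A u'"
    and \<theta>0: "invertible2 (HH B) \<theta>0" "stop B \<theta>0 = stop B b" "sbot B \<theta>0 = FH F a0"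
    using locally_essentially_surjectiveE[OF les, of "vdom A u" "vdom A u'" "stop B b"] u b ends
    by auto
  obtain a1 \<theta>1 where a1: "a1 \<in> Hor A" "hdom A a1 = vcod A u" "hcod A a1 = vcod A u'"
    and \<theta>1: "invertible2 (HH B) \<theta>1" "stop B \<theta>1 = sbot B b" "sbot B \<theta>1 = FH F a1"
    using locally_essentially_surjectiveE[OF les, of "vcod A u" "vcod A u'" "sbot B b"] u b ends
    by auto
  obtain \<beta> where \<beta>: "\<beta> \<in> Sq B" "sleft B \<beta> = sleft B b" "sright B \<beta> = sright B b"
    "stop B \<beta> = sbot B \<theta>0" "sbot B \<beta> = sbot B \<theta>1" "invertible2 (VV B) (b, \<theta>0, \<theta>1, \<beta>)"
    using B.invertible2_VV_conjugate[OF b(1) \<theta>0(1,2) \<theta>1(1,2)] by blast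
  obtain \<alpha> where \<alpha>: "\<alpha> \<in> Sq A" "sleft A \<alpha> = u" "sright A \<alpha> = u'" "FS F \<alpha> = \<beta>"
    using fully_faithful_on_squaresD[OF ff u a0(1) a1(1) a0(2,3) a1(2,3) \<beta>(1)] b \<beta> \<theta>0 \<theta>1
    by auto
  with \<beta>(6) show "\<exists>a\<in>Sq A. sleft A a = u \<and> sright A a = u' \<and>
      (\<exists>\<theta>. invertible2 (VV B) \<theta> \<and> src2 (VV B) \<theta> = b \<and> tgt2 (VV B) \<theta> = FS F a)"
    by fastforce
qed

lemma locally_fully_faithful_VV:
  assumes ff: "fully_faithful_on_squares A B F"
  shows "locally_fully_faithful (VV A) (VV B) (VF F)"
  unfolding locally_fully_faithful_def VV_simps VF_simps
proof (intro ballI impI)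
  fix a c \<beta>
  assume a: "a \<in> Sq A" "c \<in> Sq A" "sleft A a = sleft A c \<and> sright A a = sright A c"
    and \<beta>: "\<beta> \<in> Cell (VV B)" "src2 (VV B) \<beta> = FS F a \<and> tgt2 (VV B) \<beta> = FS F c"
  obtain \<sigma>0 \<sigma>1 where \<beta>_eq: "\<beta> = (FS F a, \<sigma>0, \<sigma>1, FS F c)"
    using \<beta>(2) by (cases \<beta>) auto
  have cell: "(FS F a, \<sigma>0, \<sigma>1, FS F c) \<in> Cell (VV B)"
    using \<beta>(1) \<beta>_eq by simp
  have ends: "hdom A (stop A a) = hdom A (stop A c)" "hcod A (stop A a) = hcod A (stop A c)"
    "hdom A (sbot A a) = hdom A (sbot A c)" "hcod A (sbot A a) = hcod A (sbot A c)"
    using a by (metis A.Sq_boundary(5-8))+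
  note lff = locally_fully_faithfulD[OF locally_fully_faithful_HH[OF ff], unfolded HH_simps HF_simps]
  have \<tau>0_unique: "\<exists>!\<tau>. \<tau> \<in> Cell (HH A) \<and> stop A \<tau> = stop A a \<and> sbot A \<tau> = stop A c \<and> FS F \<tau> = \<sigma>0"
    by (rule lff) (use a ends cell in simp_all)
  have \<tau>1_unique: "\<exists>!\<tau>. \<tau> \<in> Cell (HH A) \<and> stop A \<tau> = sbot A a \<and> sbot A \<tau> = sbot A c \<and> FS F \<tau> = \<sigma>1"
    by (rule lff) (use a ends cell in simp_all)
  obtain \<tau>0 \<tau>1 where
    \<tau>0: "\<tau>0 \<in> Cell (HH A)" "stop A \<tau>0 = stop A a" "sbot A \<tau>0 = stop A c" "FS F \<tau>0 = \<sigma>0" and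
    \<tau>1: "\<tau>1 \<in> Cell (HH A)" "stop A \<tau>1 = sbot A a" "sbot A \<tau>1 = sbot A c" "FS F \<tau>1 = \<sigma>1"
    using \<tau>0_unique \<tau>1_unique by blast
  \<comment> \<open>the lifted components are compatible because F reflects equality of squares\<close>
  have "svcmp A c \<tau>0 = svcmp A \<tau>1 a"
    by (rule fully_faithful_on_squares_injective[OF ff]) (use a ends \<tau>0 \<tau>1 cell in simp_all)
  then have cellA: "(a, \<tau>0, \<tau>1, c) \<in> Cell (VV A)"
    using a \<tau>0 \<tau>1 by simp
  show "\<exists>!\<alpha>. \<alpha> \<in> Cell (VV A) \<and> src2 (VV A) \<alpha> = a \<and> tgt2 (VV A) \<alpha> = c \<and> G2 (VF F) \<alpha> = \<beta>"
  proof (rule ex1I[of _ "(a, \<tau>0, \<tau>1, c)"])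
    fix \<alpha>
    assume \<alpha>: "\<alpha> \<in> Cell (VV A) \<and> src2 (VV A) \<alpha> = a \<and> tgt2 (VV A) \<alpha> = c \<and> G2 (VF F) \<alpha> = \<beta>"
    then obtain s0 s1 where \<alpha>_eq: "\<alpha> = (a, s0, s1, c)"
      by (cases \<alpha>) auto
    have "s0 = \<tau>0"
      by (rule ex1_unique[OF \<tau>0_unique]) (use \<alpha> \<alpha>_eq \<beta>_eq \<tau>0 in simp_all)
    moreover have "s1 = \<tau>1"
      by (rule ex1_unique[OF \<tau>1_unique]) (use \<alpha> \<alpha>_eq \<beta>_eq \<tau>1 in simp_all)
    ultimately show "\<alpha> = (a, \<tau>0, \<tau>1, c)"
      using \<alpha>_eq by simp
  qed (use cellA \<beta>_eq \<tau>0 \<tau>1 in simp)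
qed

text \<open>(b2) for V F gives an invertible 2-cell \<open>(\<sigma>0, \<sigma>1)\<close> from \<open>\<beta>\<close> to some \<open>F \<alpha>0\<close>; the preimage of
  \<open>\<beta>\<close> is \<open>\<alpha>0\<close> with a lift of \<open>\<sigma>0\<close> composed on top and a lift of \<open>\<sigma>1\<inverse>\<close> below.\<close>

lemma square_lift_exists:
  assumes lff: "locally_fully_faithful (HH A) (HH B) (HF F)"
    and les: "locally_essentially_surjective (VV A) (VV B) (VF F)"
    and u: "u \<in> Ver A" "u' \<in> Ver A" and a: "a \<in> Hor A" "c \<in> Hor A"
    and ends: "hdom A a = vdom A u" "hcod A a = vdom A u'" "hdom A c = vcod A u" "hcod A c = vcod A u'"
    and \<beta>: "\<beta> \<in> Sq B" "sleft B \<beta> = FV F u" "sright B \<beta> = FV F u'"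
      "stop B \<beta> = FH F a" "sbot B \<beta> = FH F c"
  obtains \<alpha> where "\<alpha> \<in> Sq A" "sleft A \<alpha> = u" "sright A \<alpha> = u'" "stop A \<alpha> = a" "sbot A \<alpha> = c"
    "FS F \<alpha> = \<beta>"
proof -
  obtain \<alpha>0 \<theta> where \<alpha>0: "\<alpha>0 \<in> Sq A" "sleft A \<alpha>0 = u" "sright A \<alpha>0 = u'"
    and \<theta>: "invertible2 (VV B) \<theta>" "src2 (VV B) \<theta> = \<beta>" "tgt2 (VV B) \<theta> = FS F \<alpha>0"
    by (rule locally_essentially_surjectiveE[OF les, of u u' \<beta>, unfolded VV_simps VF_simps])
      (use u \<beta> in simp_all)
  obtain \<sigma>0 \<sigma>1 where \<theta>_eq: "\<theta> = (\<beta>, \<sigma>0, \<sigma>1, FS F \<alpha>0)"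
    using \<theta>(2,3) by (cases \<theta>) auto
  have cell: "(\<beta>, \<sigma>0, \<sigma>1, FS F \<alpha>0) \<in> Cell (VV B)"
    using invertible2_in_Cell[OF \<theta>(1)] \<theta>_eq by simp
  then have inv: "invertible2 (HH B) \<sigma>0" "invertible2 (HH B) \<sigma>1"
    using \<theta>(1) \<theta>_eq B.invertible2_VV_iff by auto
  obtain \<rho>1 where \<rho>1: "\<rho>1 \<in> Cell (HH B)" "stop B \<rho>1 = sbot B \<sigma>1" "sbot B \<rho>1 = stop B \<sigma>1"
    "svcmp B \<rho>1 \<sigma>1 = svid B (stop B \<sigma>1)"
    using inv(2) unfolding invertible2_def by auto
  have \<alpha>0_ends: "hdom A (stop A \<alpha>0) = vdom A u" "hcod A (stop A \<alpha>0) = vdom A u'"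
    "hdom A (sbot A \<alpha>0) = vcod A u" "hcod A (sbot A \<alpha>0) = vcod A u'"
    using A.Sq_boundary(5-8)[OF \<alpha>0(1)] \<alpha>0(2,3) by simp_all
  note lift = locally_fully_faithfulD[OF lff, unfolded HH_simps HF_simps]
  have "\<exists>!\<tau>. \<tau> \<in> Cell (HH A) \<and> stop A \<tau> = a \<and> sbot A \<tau> = stop A \<alpha>0 \<and> FS F \<tau> = \<sigma>0"
    by (rule lift) (use a ends \<alpha>0 \<alpha>0_ends cell \<beta> in simp_all)
  then obtain \<tau>0 where \<tau>0: "\<tau>0 \<in> Cell (HH A)" "stop A \<tau>0 = a" "sbot A \<tau>0 = stop A \<alpha>0" "FS F \<tau>0 = \<sigma>0"
    by blast
  have "\<exists>!\<tau>. \<tau> \<in> Cell (HH A) \<and> stop A \<tau> = sbot A \<alpha>0 \<and> sbot A \<tau> = c \<and> FS F \<tau> = \<rho>1"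
    by (rule lift) (use a ends \<alpha>0 \<alpha>0_ends cell \<rho>1 \<beta> in simp_all)
  then obtain \<tau>1 where \<tau>1: "\<tau>1 \<in> Cell (HH A)" "stop A \<tau>1 = sbot A \<alpha>0" "sbot A \<tau>1 = c" "FS F \<tau>1 = \<rho>1"
    by blast
  show thesis
  proof (rule that[of "svcmp A \<tau>1 (svcmp A \<alpha>0 \<tau>0)"])
    show "FS F (svcmp A \<tau>1 (svcmp A \<alpha>0 \<tau>0)) = \<beta>"
      using B.svcmp_left_inverse_Cell_VV[OF cell] \<alpha>0 \<tau>0 \<tau>1 \<rho>1 by simp
  qed (use u a ends \<alpha>0 \<alpha>0_ends \<tau>0 \<tau>1 in simp_all)
qed

text \<open>The identity 2-cell on \<open>F \<alpha>1 = F \<alpha>2\<close> lifts to a 2-cell \<open>\<alpha>1 \<Rightarrow> \<alpha>2\<close> of V A, whose components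
  are identities by uniqueness of globular lifts.\<close>

lemma square_lift_unique:
  assumes lff_H: "locally_fully_faithful (HH A) (HH B) (HF F)"
    and lff_V: "locally_fully_faithful (VV A) (VV B) (VF F)"
    and sq: "\<alpha>1 \<in> Sq A" "\<alpha>2 \<in> Sq A"
    and same: "sleft A \<alpha>1 = sleft A \<alpha>2" "sright A \<alpha>1 = sright A \<alpha>2"
      "stop A \<alpha>1 = stop A \<alpha>2" "sbot A \<alpha>1 = sbot A \<alpha>2"
    and eq: "FS F \<alpha>1 = FS F \<alpha>2"
  shows "\<alpha>1 = \<alpha>2"
proof -
  define a c where "a = stop A \<alpha>1" and "c = sbot A \<alpha>1"
  have "\<exists>!\<theta>. \<theta> \<in> Cell (VV A) \<and> src2 (VV A) \<theta> = \<alpha>1 \<and> tgt2 (VV A) \<theta> = \<alpha>2 \<and>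
          G2 (VF F) \<theta> = (FS F \<alpha>1, svid B (FH F a), svid B (FH F c), FS F \<alpha>2)"
    by (rule locally_fully_faithfulD[OF lff_V]) (use sq same eq in \<open>simp_all add: a_def c_def\<close>)
  then obtain \<theta> where \<theta>: "\<theta> \<in> Cell (VV A)" "src2 (VV A) \<theta> = \<alpha>1" "tgt2 (VV A) \<theta> = \<alpha>2"
    "G2 (VF F) \<theta> = (FS F \<alpha>1, svid B (FH F a), svid B (FH F c), FS F \<alpha>2)"
    by blast
  then obtain s0 s1 where \<theta>_eq: "\<theta> = (\<alpha>1, s0, s1, \<alpha>2)"
    by (cases \<theta>) auto
  note lift = locally_fully_faithfulD[OF lff_H, unfolded HH_simps HF_simps]
  have "\<exists>!\<tau>. \<tau> \<in> Cell (HH A) \<and> stop A \<tau> = a \<and> sbot A \<tau> = a \<and> FS F \<tau> = svid B (FH F a)"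
    by (rule lift) (use sq in \<open>simp_all add: a_def\<close>)
  then have "s0 = svid A a"
    by (rule ex1_unique) (use \<theta> \<theta>_eq sq same in \<open>simp_all add: a_def\<close>)
  moreover have "\<exists>!\<tau>. \<tau> \<in> Cell (HH A) \<and> stop A \<tau> = c \<and> sbot A \<tau> = c \<and> FS F \<tau> = svid B (FH F c)"
    by (rule lift) (use sq in \<open>simp_all add: c_def\<close>)
  then have "s1 = svid A c"
    by (rule ex1_unique) (use \<theta> \<theta>_eq sq same in \<open>simp_all add: c_def\<close>)
  moreover have "svcmp A \<alpha>2 s0 = svcmp A s1 \<alpha>1"
    using \<theta>(1) unfolding \<theta>_eq by (simp only: Cell_VV_iff)
  ultimately have "svcmp A \<alpha>2 (svid A a) = svcmp A (svid A c) \<alpha>1"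
    by simp
  then show ?thesis
    using sq same by (simp add: a_def c_def)
qed

lemma fully_faithful_on_squares_if_HH_VV:
  assumes lff_H: "locally_fully_faithful (HH A) (HH B) (HF F)"
    and les_V: "locally_essentially_surjective (VV A) (VV B) (VF F)"
    and lff_V: "locally_fully_faithful (VV A) (VV B) (VF F)"
  shows "fully_faithful_on_squares A B F"
  unfolding fully_faithful_on_squares_def
proof (intro ballI impI ex_ex1I)
  fix u u' a c \<beta>
  assume u: "u \<in> Ver A" "u' \<in> Ver A" and a: "a \<in> Hor A" "c \<in> Hor A"
    and ends: "hdom A a = vdom A u \<and> hcod A a = vdom A u' \<and> hdom A c = vcod A u \<and> hcod A c = vcod A u'"
    and \<beta>: "\<beta> \<in> Sq B" "sleft B \<beta> = FV F u \<and> sright B \<beta> = FV F u' \<and> stop B \<beta> = FH F a \<and> sbot B \<beta> = FH F c"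
  obtain \<alpha> where "\<alpha> \<in> Sq A" "sleft A \<alpha> = u" "sright A \<alpha> = u'" "stop A \<alpha> = a" "sbot A \<alpha> = c"
    "FS F \<alpha> = \<beta>"
    by (rule square_lift_exists[OF lff_H les_V u a]) (use ends \<beta> in auto)
  then show "\<exists>\<alpha>. \<alpha> \<in> Sq A \<and> sleft A \<alpha> = u \<and> sright A \<alpha> = u' \<and> stop A \<alpha> = a \<and> sbot A \<alpha> = c \<and>
      FS F \<alpha> = \<beta>"
    by blast
next
  fix u u' a c \<beta> \<alpha>1 \<alpha>2
  assume "\<alpha>1 \<in> Sq A \<and> sleft A \<alpha>1 = u \<and> sright A \<alpha>1 = u' \<and> stop A \<alpha>1 = a \<and> sbot A \<alpha>1 = c \<and> FS F \<alpha>1 = \<beta>"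
    "\<alpha>2 \<in> Sq A \<and> sleft A \<alpha>2 = u \<and> sright A \<alpha>2 = u' \<and> stop A \<alpha>2 = a \<and> sbot A \<alpha>2 = c \<and> FS F \<alpha>2 = \<beta>"
  then show "\<alpha>1 = \<alpha>2"
    by (intro square_lift_unique[OF lff_H lff_V]) simp_all
qed

end

theorem proposition3p12:
  fixes A :: "('o,'h,'v,'s) dbl" and B :: "('o2,'h2,'v2,'s2) dbl"
    and F :: "('o,'h,'v,'s,'o2,'h2,'v2,'s2) dfun"
  assumes "double_category A" and "double_category B" and "double_functor A B F"
  shows "double_biequivalence A B F \<longleftrightarrow>
           biequivalence (HH A) (HH B) (HF F) \<and> biequivalence (VV A) (VV B) (VF F)"
proof -
  interpret double_functor_between A B F
    using assms by (simp add: double_functor_between_def double_functor_between_axioms_def double_cat_def)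
  show ?thesis
    unfolding double_biequivalence_iff biequivalence_iff
    using locally_fully_faithful_HH locally_essentially_surjective_VV locally_fully_faithful_VV
      fully_faithful_on_squares_if_HH_VV by blast
qed

end
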